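(* Let $M$ be an $n$-dimensional manifold and let $\alpha\in\mathcal{A}(M)$ be extendible. Then there exists a unique open set $V\subset\mathbb{R}^n$ such that $(\alpha,V)\in\mathrm{EX}(M)$ and such that $U\subset V$ for every $U$ with $(\alpha,U)\in\mathrm{EX}(M)$.
   Context: Conventions: $M$ is an $n$-dimensional smooth manifold (Hausdorff, second countable) with maximal $C^\infty$ atlas $\mathcal{A}(M)$; every chart $\alpha\in\mathcal{A}(M)$ has open domain $\mathrm{dom}(\alpha)\subset M$ and open range $\mathrm{ran}(\alpha)\subset\mathbb{R}^n$. For $A\subset\mathbb{R}^n$, $\partial A$ is its topological boundary in $\mathbb{R}^n$; for $A\subset U\subset\mathbb{R}^n$, $\partial_U A$ is the topological boundary of $A$ relative to $U$ (for $A,U$ open, $\partial_U A=U\cap\partial A$). An admissible boundary point of $\alpha\in\mathcal{A}(M)$ is a point $p\in\partial\,\mathrm{ran}(\alpha)$ such that every sequence $(x_i)\subset\mathrm{dom}(\alpha)$ with $\alpha(x_i)\to p$ has no accumulation point in $M$; $B(\alpha)$ denotes the set of admissible boundary points of $\alpha$. An extension is a pair $(\alpha,U)$ with $\alpha\in\mathcal{A}(M)$, $U\subset\mathbb{R}^n$ open, $\mathrm{ran}(\alpha)\subset U$ and $\emptyset\neq\partial_U\mathrm{ran}(\alpha)\subset B(\alpha)$; $\mathrm{EX}(M)$ is the set of all extensions, and $\alpha$ is called extendible if $(\alpha,U)\in\mathrm{EX}(M)$ for some $U$. *)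

theory Defs
  imports "HOL-Analysis.Analysis"
begin

fun Ck_on :: "nat \<Rightarrow> ('a::euclidean_space) set \<Rightarrow> ('a \<Rightarrow> 'b::euclidean_space) \<Rightarrow> bool" where
  "Ck_on 0 S f = continuous_on S f"
| "Ck_on (Suc k) S f =
     (f differentiable_on S \<and>
      (\<forall>i\<in>Basis. Ck_on k S (\<lambda>x. frechet_derivative f (at x) i)))"

definition smooth_on :: "('a::euclidean_space) set \<Rightarrow> ('a \<Rightarrow> 'b::euclidean_space) \<Rightarrow> bool" where
  "smooth_on S f \<longleftrightarrow> (\<forall>k. Ck_on k S f)"

text \<open>A chart of an n-dimensional manifold M (the whole type 'm) with values in
  real^'n (n = CARD('n)) is a pair (dom, map).\<close>
type_synonym ('m, 'n) chart = "'m set \<times> ('m \<Rightarrow> real ^ 'n)"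

definition cdom :: "('m, 'n) chart \<Rightarrow> 'm set" where
  "cdom \<alpha> = fst \<alpha>"

definition cran :: "('m, 'n) chart \<Rightarrow> (real ^ 'n) set" where
  "cran \<alpha> = snd \<alpha> ` fst \<alpha>"

definition is_chart :: "('m::topological_space, 'n::finite) chart \<Rightarrow> bool" where
  "is_chart \<alpha> \<longleftrightarrow> open (cdom \<alpha>) \<and> open (cran \<alpha>) \<and>
     (\<exists>g. homeomorphism (cdom \<alpha>) (cran \<alpha>) (snd \<alpha>) g)"

definition smooth_compatible :: "('m, 'n::finite) chart \<Rightarrow> ('m, 'n) chart \<Rightarrow> bool" where
  "smooth_compatible \<alpha> \<beta> \<longleftrightarrow>
     smooth_on (snd \<alpha> ` (cdom \<alpha> \<inter> cdom \<beta>)) (snd \<beta> \<circ> inv_into (cdom \<alpha>) (snd \<alpha>)) \<and>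
     smooth_on (snd \<beta> ` (cdom \<alpha> \<inter> cdom \<beta>)) (snd \<alpha> \<circ> inv_into (cdom \<beta>) (snd \<beta>))"

definition smooth_atlas :: "('m::topological_space, 'n::finite) chart set \<Rightarrow> bool" where
  "smooth_atlas A \<longleftrightarrow> (\<forall>\<alpha>\<in>A. is_chart \<alpha>) \<and> (\<Union>\<alpha>\<in>A. cdom \<alpha>) = UNIV \<and>
     (\<forall>\<alpha>\<in>A. \<forall>\<beta>\<in>A. smooth_compatible \<alpha> \<beta>)"

definition maximal_smooth_atlas :: "('m::topological_space, 'n::finite) chart set \<Rightarrow> bool" where
  "maximal_smooth_atlas A \<longleftrightarrow> smooth_atlas A \<and>
     (\<forall>\<beta>. is_chart \<beta> \<and> (\<forall>\<alpha>\<in>A. smooth_compatible \<alpha> \<beta>) \<longrightarrow> \<beta> \<in> A)"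

definition seq_accumulation_point :: "(nat \<Rightarrow> 'm::topological_space) \<Rightarrow> 'm \<Rightarrow> bool" where
  "seq_accumulation_point x y \<longleftrightarrow> (\<forall>S. open S \<and> y \<in> S \<longrightarrow> infinite {i. x i \<in> S})"

definition admissible_boundary :: "('m::topological_space, 'n::finite) chart \<Rightarrow> (real ^ 'n) set" where
  "admissible_boundary \<alpha> = {p \<in> frontier (cran \<alpha>).
     \<forall>x. (\<forall>i. x i \<in> cdom \<alpha>) \<and> ((\<lambda>i. snd \<alpha> (x i)) \<longlonglongrightarrow> p) \<longrightarrow>
         \<not> (\<exists>y. seq_accumulation_point x y)}"

text \<open>(alpha, U) in EX(M). For open A, U: relative boundary of A in U is U \<inter> frontier A.\<close>
definition is_extension :: "('m::topological_space, 'n::finite) chart set \<Rightarrow> ('m, 'n) chart \<Rightarrow> (real ^ 'n) set \<Rightarrow> bool" where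
  "is_extension A \<alpha> U \<longleftrightarrow> \<alpha> \<in> A \<and> open U \<and> cran \<alpha> \<subseteq> U \<and>
     U \<inter> frontier (cran \<alpha>) \<noteq> {} \<and> U \<inter> frontier (cran \<alpha>) \<subseteq> admissible_boundary \<alpha>"

definition extendible :: "('m::topological_space, 'n::finite) chart set \<Rightarrow> ('m, 'n) chart \<Rightarrow> bool" where
  "extendible A \<alpha> \<longleftrightarrow> (\<exists>U. is_extension A \<alpha> U)"

end

theory Submission
  imports Defs
begin

text \<open>Every condition defining an extension (\<alpha>, U) is preserved under nonempty unions of
  the sets U, so the union of all extensions of \<alpha> is the largest one.\<close>

lemma is_extension_Union:
  assumes "\<U> \<noteq> {}"
    and "\<And>U. U \<in> \<U> \<Longrightarrow> is_extension A \<alpha> U"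
  shows "is_extension A \<alpha> (\<Union>\<U>)"
proof -
  obtain U0 where "U0 \<in> \<U>" using assms(1) by blast
  with assms(2) have U0: "is_extension A \<alpha> U0" .
  show ?thesis
    unfolding is_extension_def
  proof (intro conjI)
    show "\<alpha> \<in> A" using U0 unfolding is_extension_def by blast
    show "open (\<Union>\<U>)" using assms(2) by (intro open_Union) (auto simp: is_extension_def)
    show "cran \<alpha> \<subseteq> \<Union>\<U>" using U0 \<open>U0 \<in> \<U>\<close> unfolding is_extension_def by blast
    show "\<Union>\<U> \<inter> frontier (cran \<alpha>) \<noteq> {}"
      using U0 \<open>U0 \<in> \<U>\<close> unfolding is_extension_def by blast
    show "\<Union>\<U> \<inter> frontier (cran \<alpha>) \<subseteq> admissible_boundary \<alpha>"
      using assms(2) unfolding is_extension_def by blast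
  qed
qed

theorem mainTheorem1:
  fixes A :: "('m::{t2_space, second_countable_topology}, 'n::finite) chart set"
    and \<alpha> :: "('m, 'n) chart"
  assumes "maximal_smooth_atlas A"
    and "\<alpha> \<in> A"
    and "extendible A \<alpha>"
  shows "\<exists>!V. is_extension A \<alpha> V \<and> (\<forall>U. is_extension A \<alpha> U \<longrightarrow> U \<subseteq> V)"
proof -
  define V where "V = \<Union>{U. is_extension A \<alpha> U}"
  have "{U. is_extension A \<alpha> U} \<noteq> {}" using assms(3) unfolding extendible_def by blast
  then have "is_extension A \<alpha> V" unfolding V_def by (rule is_extension_Union) simp
  moreover have "\<forall>U. is_extension A \<alpha> U \<longrightarrow> U \<subseteq> V" unfolding V_def by blast
  ultimately show ?thesis by (metis subset_antisym)
qed

end
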